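(* Let $w(x)=a\times x+b\in\mathcal{R}$. If $w\not\equiv0$, then $a\neq0$, $a\cdot b=0$, and $\Gamma$ is axially symmetric around the line parallel to $a$ passing through the point $b_a:=|a|^{-2}(a\times b)$. Conversely, if $\Gamma$ is axially symmetric around the line parallel to some $a\neq0$ and passing through some $\tilde b\in\mathbb{R}^3$, then $\tilde w(x)=a\times(x-\tilde b)$ belongs to $\mathcal{R}\setminus\{0\}$.
   Context: $\Gamma\subset\mathbb{R}^3$ is a two-dimensional closed (compact, without boundary), connected, oriented surface of class $C^2$ with unit outward normal $n$. $\mathcal{R}=\{w(x)=a\times x+b,\ x\in\mathbb{R}^3: a,b\in\mathbb{R}^3,\ w|_\Gamma\cdot n=0\text{ on }\Gamma\}$. A set is axially symmetric around a line if it is invariant under rotations by every angle around that line. *)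

theory Defs
  imports "HOL-Analysis.Analysis"
begin

text \<open>A closed (compact, boundaryless), connected, oriented C^2 surface Gamma in R^3
  together with its unit outward normal field nrm.\<close>
definition closed_C2_surface :: "(real^3) set \<Rightarrow> (real^3 \<Rightarrow> real^3) \<Rightarrow> bool" where
  "closed_C2_surface \<Gamma> nrm \<longleftrightarrow>
     \<Gamma> \<noteq> {} \<and> compact \<Gamma> \<and> connected \<Gamma> \<and>
     (\<exists>\<Omega>. open \<Omega> \<and> bounded \<Omega> \<and> frontier \<Omega> = \<Gamma> \<and>
       (\<forall>p\<in>\<Gamma>. \<exists>U (\<phi>::real^3 \<Rightarrow> real) \<phi>' \<phi>''.
          open U \<and> p \<in> U \<and>
          (\<forall>x\<in>U. (\<phi> has_derivative (\<lambda>h. \<phi>' x \<bullet> h)) (at x)) \<and>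
          (\<forall>x\<in>U. (\<phi>' has_derivative \<phi>'' x) (at x)) \<and>
          (\<forall>h. continuous_on U (\<lambda>x. \<phi>'' x h)) \<and>
          (\<forall>x\<in>U. \<phi>' x \<noteq> 0) \<and>
          \<Gamma> \<inter> U = {x\<in>U. \<phi> x = 0} \<and>
          \<Omega> \<inter> U = {x\<in>U. \<phi> x < 0} \<and>
          (\<forall>x\<in>\<Gamma> \<inter> U. nrm x = (1 / norm (\<phi>' x)) *\<^sub>R \<phi>' x)))"

definition rigid_tangent :: "(real^3) set \<Rightarrow> (real^3 \<Rightarrow> real^3) \<Rightarrow> (real^3 \<Rightarrow> real^3) set" where
  "rigid_tangent \<Gamma> nrm =
     {w. (\<exists>a b. w = (\<lambda>x. cross3 a x + b)) \<and> (\<forall>x\<in>\<Gamma>. w x \<bullet> nrm x = 0)}"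

text \<open>Rotation of v by angle theta about the unit axis u (Rodrigues' formula).\<close>
definition rot_axis :: "real^3 \<Rightarrow> real \<Rightarrow> real^3 \<Rightarrow> real^3" where
  "rot_axis u \<theta> v = cos \<theta> *\<^sub>R v + sin \<theta> *\<^sub>R cross3 u v + ((1 - cos \<theta>) * (u \<bullet> v)) *\<^sub>R u"

definition axially_symmetric :: "(real^3) set \<Rightarrow> real^3 \<Rightarrow> real^3 \<Rightarrow> bool" where
  "axially_symmetric S a c \<longleftrightarrow>
     (\<forall>\<theta>. (\<lambda>x. c + rot_axis ((1 / norm a) *\<^sub>R a) \<theta> (x - c)) ` S = S)"

end

theory Submission
  imports Defs
begin

text \<open>If w(x) = a \<times> x + b is tangent to \<Gamma>, then \<Gamma> is invariant under the flow of w: writing \<Gamma>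
  locally as a regular zero set {\<phi> = 0}, the function \<nabla>\<phi> \<bullet> w vanishes on \<Gamma> and is Lipschitz, hence
  O(\<phi>), so along an integral curve \<gamma> the derivative of \<phi> \<circ> \<gamma> is O(\<phi> \<circ> \<gamma>) and Gronwall's
  inequality keeps \<phi> \<circ> \<gamma> = 0; a connectedness argument in time makes this global. The flow of w is
  an explicit screw motion. Since \<Gamma> is bounded, the translation part must vanish: for a = 0 this
  forces b = 0, and for a \<noteq> 0 it forces a \<bullet> b = 0, leaving a pure rotation about the line
  through b_a parallel to a. Conversely, if \<Gamma> is symmetric about the line through c parallel to a,
  differentiating at angle 0 the rotations of x \<in> \<Gamma> about that line shows that a \<times> (x - c) is
  tangent to \<Gamma> at x.\<close>

lemma gronwall_zero_forward:
  fixes \<psi> \<psi>' :: "real \<Rightarrow> real"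
  assumes deriv: "\<And>t. a \<le> t \<Longrightarrow> t \<le> T \<Longrightarrow> (\<psi> has_real_derivative \<psi>' t) (at t)"
    and bound: "\<And>t. a \<le> t \<Longrightarrow> t \<le> T \<Longrightarrow> \<bar>\<psi>' t\<bar> \<le> K * \<bar>\<psi> t\<bar>"
    and "\<psi> a = 0" and "a \<le> T"
  shows "\<psi> T = 0"
proof -
  let ?E = "\<lambda>t. (\<psi> t)\<^sup>2 * exp (- (2 * K * t))"
  have "?E T \<le> ?E a"
  proof (rule DERIV_nonpos_imp_nonincreasing[OF \<open>a \<le> T\<close>])
    fix t assume t: "a \<le> t" "t \<le> T"
    have "\<psi> t * \<psi>' t \<le> \<bar>\<psi> t\<bar> * \<bar>\<psi>' t\<bar>" by (simp add: abs_mult[symmetric])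
    also have "\<dots> \<le> \<bar>\<psi> t\<bar> * (K * \<bar>\<psi> t\<bar>)" by (simp add: bound[OF t] mult_left_mono)
    also have "\<dots> = K * (\<psi> t)\<^sup>2" by (simp add: power2_eq_square)
    finally have "\<psi> t * \<psi>' t * exp (- (2 * K * t)) \<le> K * (\<psi> t)\<^sup>2 * exp (- (2 * K * t))"
      by (simp add: mult_right_mono)
    then have "2 * \<psi> t * \<psi>' t * exp (- (2 * K * t)) + (\<psi> t)\<^sup>2 * (exp (- (2 * K * t)) * - (2 * K)) \<le> 0"
      by (simp add: algebra_simps)
    moreover have "(?E has_real_derivative
        2 * \<psi> t * \<psi>' t * exp (- (2 * K * t)) + (\<psi> t)\<^sup>2 * (exp (- (2 * K * t)) * - (2 * K))) (at t)"
      by (rule derivative_eq_intros deriv[OF t] refl | simp)+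
    ultimately show "\<exists>y. (?E has_real_derivative y) (at t) \<and> y \<le> 0" by blast
  qed
  then show ?thesis using \<open>\<psi> a = 0\<close> by (simp add: mult_le_0_iff)
qed

lemma gronwall_zero:
  fixes \<psi> \<psi>' :: "real \<Rightarrow> real"
  assumes deriv: "\<And>t. \<bar>t - a\<bar> < \<delta> \<Longrightarrow> (\<psi> has_real_derivative \<psi>' t) (at t)"
    and bound: "\<And>t. \<bar>t - a\<bar> < \<delta> \<Longrightarrow> \<bar>\<psi>' t\<bar> \<le> K * \<bar>\<psi> t\<bar>"
    and "\<psi> a = 0" and "\<bar>t - a\<bar> < \<delta>"
  shows "\<psi> t = 0"
proof (cases "a \<le> t")
  case True
  show ?thesis
    by (rule gronwall_zero_forward[where \<psi>' = \<psi>' and K = K and a = a]) (use assms True in auto)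
next
  case False
  have "(\<lambda>s. \<psi> (- s)) (- t) = 0"
  proof (rule gronwall_zero_forward[where \<psi> = "\<lambda>s. \<psi> (- s)" and \<psi>' = "\<lambda>s. - \<psi>' (- s)"
      and K = K and a = "- a" and T = "- t"])
    fix s assume "- a \<le> s" "s \<le> - t"
    then have s: "\<bar>- s - a\<bar> < \<delta>" using \<open>\<bar>t - a\<bar> < \<delta>\<close> by auto
    have "((\<lambda>s. \<psi> (- s)) has_real_derivative \<psi>' (- s) * - 1) (at s)"
      by (rule DERIV_chain2[where g = uminus, OF deriv[OF s]]) (auto intro!: derivative_eq_intros)
    then show "((\<lambda>s. \<psi> (- s)) has_real_derivative - \<psi>' (- s)) (at s)" by simp
    show "\<bar>- \<psi>' (- s)\<bar> \<le> K * \<bar>\<psi> (- s)\<bar>" using bound[OF s] by simp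
  qed (use \<open>\<psi> a = 0\<close> False in auto)
  then show ?thesis by simp
qed

lemma lipschitz_on_compact_convex_of_derivative:
  fixes f :: "'a::euclidean_space \<Rightarrow> 'b::real_normed_vector"
  assumes "compact S" "convex S"
    and deriv: "\<And>x. x \<in> S \<Longrightarrow> (f has_derivative f' x) (at x within S)"
    and cont: "\<And>h. continuous_on S (\<lambda>x. f' x h)"
  obtains L where "L-lipschitz_on S f"
proof -
  let ?M = "\<lambda>x. \<Sum>i\<in>Basis. norm (f' x i)"
  have "continuous_on S ?M"
    by (intro continuous_intros cont)
  then have "compact (?M ` S)" using \<open>compact S\<close> by (rule compact_continuous_image)
  then obtain B where B: "\<forall>y\<in>?M ` S. norm y \<le> B"
    by (auto dest!: compact_imp_bounded simp: bounded_iff)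
  have "onorm (f' x) \<le> max B 0" if "x \<in> S" for x
  proof -
    have "onorm (f' x) \<le> ?M x"
      by (rule onorm_componentwise[OF has_derivative_bounded_linear[OF deriv[OF that]]])
    also have "\<dots> \<le> B" using B that by auto
    finally show ?thesis by simp
  qed
  then have "(max B 0)-lipschitz_on S f"
    by (intro bounded_derivative_imp_lipschitz[OF deriv \<open>convex S\<close>]) auto
  then show ?thesis by (rule that)
qed

lemma gradient_inner_positive_near:
  fixes \<phi>' :: "'a::real_inner \<Rightarrow> 'a"
  assumes "isCont \<phi>' p" "\<phi>' p \<noteq> 0"
  obtains r where "r > 0" "\<And>y. y \<in> ball p r \<Longrightarrow> \<phi>' y \<bullet> \<phi>' p \<ge> (norm (\<phi>' p))\<^sup>2 / 2"
proof -
  let ?v = "\<phi>' p"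
  have "norm ?v / 2 > 0" using assms(2) by simp
  then obtain r where "r > 0" and r: "\<forall>y. dist y p < r \<longrightarrow> dist (\<phi>' y) ?v < norm ?v / 2"
    using assms(1) unfolding continuous_at_eps_delta by blast
  have "\<phi>' y \<bullet> ?v \<ge> (norm ?v)\<^sup>2 / 2" if "y \<in> ball p r" for y
  proof -
    have "\<bar>(\<phi>' y - ?v) \<bullet> ?v\<bar> \<le> norm (\<phi>' y - ?v) * norm ?v" by (rule Cauchy_Schwarz_ineq2)
    also have "\<dots> \<le> norm ?v / 2 * norm ?v"
      using r that by (intro mult_right_mono less_imp_le) (auto simp: dist_norm norm_minus_commute)
    moreover have "\<phi>' y \<bullet> ?v = (norm ?v)\<^sup>2 + (\<phi>' y - ?v) \<bullet> ?v"
      by (simp add: inner_diff_left power2_norm_eq_inner)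
    ultimately show ?thesis by (simp add: power2_eq_square abs_le_iff)
  qed
  then show ?thesis using \<open>r > 0\<close> that by blast
qed

lemma zero_within_of_deriv_le_neg:
  fixes f f' :: "real \<Rightarrow> real"
  assumes "m > 0"
    and deriv: "\<And>s. \<bar>s\<bar> \<le> \<bar>f 0\<bar> / m \<Longrightarrow> (f has_real_derivative f' s) (at s) \<and> f' s \<le> - m"
  obtains s where "\<bar>s\<bar> \<le> \<bar>f 0\<bar> / m" "f s = 0"
proof -
  define s0 where "s0 = f 0 / m"
  have s0: "\<bar>s0\<bar> = \<bar>f 0\<bar> / m" using \<open>m > 0\<close> by (simp add: s0_def abs_div)
  have cont: "continuous_on {- \<bar>s0\<bar>..\<bar>s0\<bar>} f"
    using deriv by (intro DERIV_continuous_on[where D = f']) (auto simp: s0 intro: has_field_derivative_at_within)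
  \<comment> \<open>f s + m s is nonincreasing, so f changes sign between 0 and s0.\<close>
  have dF: "\<exists>D. ((\<lambda>s. f s + m * s) has_real_derivative D) (at s) \<and> D \<le> 0" if "\<bar>s\<bar> \<le> \<bar>s0\<bar>" for s
    using deriv[of s] that s0 by (auto intro!: derivative_eq_intros)
  show ?thesis
  proof (cases "f 0 \<ge> 0")
    case True
    then have "s0 \<ge> 0" using \<open>m > 0\<close> by (simp add: s0_def)
    have "f s0 + m * s0 \<le> f 0 + m * 0"
      by (rule DERIV_nonpos_imp_nonincreasing[OF \<open>s0 \<ge> 0\<close>]) (use dF in auto)
    then have "f s0 \<le> 0" using \<open>m > 0\<close> by (simp add: s0_def)
    moreover have "continuous_on {0..s0} f" using cont by (rule continuous_on_subset) auto
    ultimately obtain s where "0 \<le> s" "s \<le> s0" "f s = 0"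
      using IVT2'[of f s0 0 0] True \<open>s0 \<ge> 0\<close> by auto
    then show ?thesis using that[of s] s0 by auto
  next
    case False
    then have "s0 \<le> 0" using \<open>m > 0\<close> by (simp add: s0_def divide_nonpos_pos)
    have "f 0 + m * 0 \<le> f s0 + m * s0"
      by (rule DERIV_nonpos_imp_nonincreasing[OF \<open>s0 \<le> 0\<close>]) (use dF in auto)
    then have "f s0 \<ge> 0" using \<open>m > 0\<close> by (simp add: s0_def)
    moreover have "continuous_on {s0..0} f" using cont by (rule continuous_on_subset) auto
    ultimately obtain s where "s0 \<le> s" "s \<le> 0" "f s = 0"
      using IVT2'[of f 0 0 s0] False \<open>s0 \<le> 0\<close> by auto
    then show ?thesis using that[of s] s0 by auto
  qed
qed

lemma regular_point_zero_set_nearby: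
  fixes \<phi> :: "'a::real_inner \<Rightarrow> real"
  assumes "open U" "p \<in> U"
    and deriv: "\<And>x. x \<in> U \<Longrightarrow> (\<phi> has_derivative (\<lambda>h. \<phi>' x \<bullet> h)) (at x)"
    and "isCont \<phi>' p" "\<phi>' p \<noteq> 0" "\<phi> p = 0" "e > 0"
  obtains r C where "0 < r" "r \<le> e"
    "\<And>y. y \<in> ball p r \<Longrightarrow> \<exists>z\<in>ball p e. \<phi> z = 0 \<and> norm (y - z) \<le> C * \<bar>\<phi> y\<bar>"
proof -
  define v where "v = \<phi>' p"
  define m where "m = (norm v)\<^sup>2 / 2"
  have "norm v > 0" "m > 0" using \<open>\<phi>' p \<noteq> 0\<close> by (auto simp: v_def m_def)
  obtain r1 where "r1 > 0" "ball p r1 \<subseteq> U" and pos: "\<And>y. y \<in> ball p r1 \<Longrightarrow> \<phi>' y \<bullet> v \<ge> m"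
  proof -
    obtain r1 where "r1 > 0" "\<And>y. y \<in> ball p r1 \<Longrightarrow> \<phi>' y \<bullet> v \<ge> m"
      using gradient_inner_positive_near assms unfolding v_def m_def by metis
    moreover obtain r2 where "r2 > 0" "ball p r2 \<subseteq> U" using assms openE by metis
    ultimately show ?thesis by (intro that[of "min r1 r2"]) auto
  qed
  define r0 where "r0 = min e r1"
  have "r0 > 0" using \<open>e > 0\<close> \<open>r1 > 0\<close> by (simp add: r0_def)
  have "isCont \<phi> p" using deriv[OF \<open>p \<in> U\<close>] by (rule has_derivative_continuous)
  moreover have "m * r0 / (2 * norm v) > 0" using \<open>r0 > 0\<close> \<open>m > 0\<close> \<open>norm v > 0\<close> by simp
  ultimately obtain r2 where "r2 > 0"
    and "\<forall>y. dist y p < r2 \<longrightarrow> dist (\<phi> y) (\<phi> p) < m * r0 / (2 * norm v)"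
    unfolding continuous_at_eps_delta by blast
  then have small: "\<And>y. dist y p < r2 \<Longrightarrow> \<bar>\<phi> y\<bar> < m * r0 / (2 * norm v)"
    using \<open>\<phi> p = 0\<close> by (simp add: dist_real_def)
  define r where "r = min (r0 / 2) r2"
  have "\<exists>z\<in>ball p e. \<phi> z = 0 \<and> norm (y - z) \<le> (norm v / m) * \<bar>\<phi> y\<bar>" if y: "y \<in> ball p r" for y
  proof -
    \<comment> \<open>Descend from y along the gradient direction at p until the zero set is hit.\<close>
    have near: "y - s *\<^sub>R v \<in> ball p r0" if s: "\<bar>s\<bar> \<le> \<bar>\<phi> y\<bar> / m" for s
    proof -
      have "\<bar>s\<bar> * norm v \<le> \<bar>\<phi> y\<bar> / m * norm v" using s norm_ge_zero by (rule mult_right_mono)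
      also have "\<dots> < r0 / 2"
        using small[of y] y \<open>m > 0\<close> \<open>norm v > 0\<close> by (simp add: r_def dist_commute field_simps)
      finally have "dist y (y - s *\<^sub>R v) < r0 / 2" by (simp add: dist_norm)
      moreover have "dist p y < r0 / 2" using y by (simp add: r_def)
      ultimately show ?thesis using dist_triangle[of p "y - s *\<^sub>R v" y] by simp
    qed
    obtain s where s: "\<bar>s\<bar> \<le> \<bar>\<phi> y\<bar> / m" "\<phi> (y - s *\<^sub>R v) = 0"
    proof (rule zero_within_of_deriv_le_neg[OF \<open>m > 0\<close>, of "\<lambda>s. \<phi> (y - s *\<^sub>R v)" "\<lambda>s. - (\<phi>' (y - s *\<^sub>R v) \<bullet> v)"])
      fix s assume "\<bar>s\<bar> \<le> \<bar>\<phi> (y - 0 *\<^sub>R v)\<bar> / m"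
      then have "y - s *\<^sub>R v \<in> ball p r0" using near by simp
      then have "y - s *\<^sub>R v \<in> ball p r1" "y - s *\<^sub>R v \<in> U"
        using \<open>ball p r1 \<subseteq> U\<close> by (auto simp: r0_def)
      have "((\<lambda>s. y - s *\<^sub>R v) has_derivative (\<lambda>h. - (h *\<^sub>R v))) (at s)"
        by (auto intro!: derivative_eq_intros)
      from has_derivative_compose[OF this deriv[OF \<open>y - s *\<^sub>R v \<in> U\<close>]]
      have "((\<lambda>s. \<phi> (y - s *\<^sub>R v)) has_real_derivative - (\<phi>' (y - s *\<^sub>R v) \<bullet> v)) (at s)"
        by (rule has_derivative_imp_has_field_derivative) simp
      then show "((\<lambda>s. \<phi> (y - s *\<^sub>R v)) has_real_derivative - (\<phi>' (y - s *\<^sub>R v) \<bullet> v)) (at s)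
          \<and> - (\<phi>' (y - s *\<^sub>R v) \<bullet> v) \<le> - m"
        using pos[OF \<open>y - s *\<^sub>R v \<in> ball p r1\<close>] by simp
    qed (use that in simp_all)
    show ?thesis
      using near[OF s(1)] s \<open>norm v > 0\<close> \<open>m > 0\<close>
      by (intro bexI[of _ "y - s *\<^sub>R v"]) (auto simp: r0_def field_simps mult_right_mono)
  qed
  moreover have "0 < r" "r \<le> e" using \<open>r0 > 0\<close> \<open>r2 > 0\<close> by (auto simp: r_def r0_def)
  ultimately show ?thesis using that by blast
qed

lemma lipschitz_vanishing_on_regular_zero_set:
  fixes \<phi> :: "'a::real_inner \<Rightarrow> real" and g :: "'a \<Rightarrow> real"
  assumes "open U" "p \<in> U"
    and "\<And>x. x \<in> U \<Longrightarrow> (\<phi> has_derivative (\<lambda>h. \<phi>' x \<bullet> h)) (at x)"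
    and "isCont \<phi>' p" "\<phi>' p \<noteq> 0" "\<phi> p = 0" "e > 0"
    and lip: "L-lipschitz_on (ball p e) g"
    and vanish: "\<And>z. z \<in> ball p e \<Longrightarrow> \<phi> z = 0 \<Longrightarrow> g z = 0"
  obtains r K where "0 < r" "r \<le> e" "\<And>y. y \<in> ball p r \<Longrightarrow> \<bar>g y\<bar> \<le> K * \<bar>\<phi> y\<bar>"
proof -
  obtain r C where "0 < r" "r \<le> e"
    and zero: "\<And>y. y \<in> ball p r \<Longrightarrow> \<exists>z\<in>ball p e. \<phi> z = 0 \<and> norm (y - z) \<le> C * \<bar>\<phi> y\<bar>"
    using regular_point_zero_set_nearby[OF assms(1-7)] by blast
  have "\<bar>g y\<bar> \<le> (L * C) * \<bar>\<phi> y\<bar>" if y: "y \<in> ball p r" for y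
  proof -
    obtain z where z: "z \<in> ball p e" "\<phi> z = 0" "norm (y - z) \<le> C * \<bar>\<phi> y\<bar>"
      using zero[OF y] by blast
    have "y \<in> ball p e" using y \<open>r \<le> e\<close> by auto
    have "\<bar>g y\<bar> = \<bar>g y - g z\<bar>" using vanish z by simp
    also have "\<dots> \<le> L * norm (y - z)"
      using lipschitz_on_normD[OF lip \<open>y \<in> ball p e\<close> z(1)] by simp
    also have "\<dots> \<le> L * (C * \<bar>\<phi> y\<bar>)"
      using z(3) lipschitz_on_nonneg[OF lip] by (rule mult_left_mono)
    finally show ?thesis by simp
  qed
  then show ?thesis using that \<open>0 < r\<close> \<open>r \<le> e\<close> by blast
qed

lemma closed_C2_surface_chart:
  assumes "closed_C2_surface \<Gamma> nrm" and "p \<in> \<Gamma>"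
  obtains U and \<phi> :: "real^3 \<Rightarrow> real" and \<phi>' \<phi>'' where
    "open U" "p \<in> U"
    "\<forall>x\<in>U. (\<phi> has_derivative (\<lambda>h. \<phi>' x \<bullet> h)) (at x)"
    "\<forall>x\<in>U. (\<phi>' has_derivative \<phi>'' x) (at x)"
    "\<forall>h. continuous_on U (\<lambda>x. \<phi>'' x h)"
    "\<forall>x\<in>U. \<phi>' x \<noteq> 0"
    "\<Gamma> \<inter> U = {x\<in>U. \<phi> x = 0}"
    "\<forall>x\<in>\<Gamma> \<inter> U. nrm x = (1 / norm (\<phi>' x)) *\<^sub>R \<phi>' x"
  using assms unfolding closed_C2_surface_def
  by (elim conjE exE) (drule (1) bspec, elim exE conjE, rule that, assumption+)

lemma closed_C2_surface_nonempty: "closed_C2_surface \<Gamma> nrm \<Longrightarrow> \<Gamma> \<noteq> {}"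
  by (simp add: closed_C2_surface_def)

lemma closed_C2_surface_compact: "closed_C2_surface \<Gamma> nrm \<Longrightarrow> compact \<Gamma>"
  by (simp add: closed_C2_surface_def)

lemma lipschitz_on_inner_of_C1:
  fixes \<phi>' w :: "'a::euclidean_space \<Rightarrow> 'a"
  assumes "compact S" "convex S" "S \<subseteq> U"
    and d\<phi>': "\<forall>x\<in>U. (\<phi>' has_derivative \<phi>'' x) (at x)"
    and \<phi>''_cont: "\<forall>h. continuous_on U (\<lambda>x. \<phi>'' x h)"
    and w_deriv: "\<And>x. (w has_derivative w' x) (at x)"
    and w'_cont: "\<And>h. continuous_on UNIV (\<lambda>x. w' x h)"
  obtains L where "L-lipschitz_on S (\<lambda>x. \<phi>' x \<bullet> w x)"
proof (rule lipschitz_on_compact_convex_of_derivative[OF \<open>compact S\<close> \<open>convex S\<close>])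
  have c\<phi>': "continuous_on U \<phi>'"
    by (intro continuous_at_imp_continuous_on ballI has_derivative_continuous[OF d\<phi>'[rule_format]])
  have cw: "continuous_on UNIV w"
    by (intro continuous_at_imp_continuous_on ballI has_derivative_continuous[OF w_deriv])
  show "((\<lambda>x. \<phi>' x \<bullet> w x) has_derivative (\<lambda>h. \<phi>' x \<bullet> w' x h + \<phi>'' x h \<bullet> w x)) (at x within S)"
    if "x \<in> S" for x
  proof -
    have "(\<phi>' has_derivative \<phi>'' x) (at x)" using that \<open>S \<subseteq> U\<close> d\<phi>' by auto
    then show ?thesis by (rule has_derivative_at_withinI[OF has_derivative_inner[OF _ w_deriv]])
  qed
  show "continuous_on S (\<lambda>x. \<phi>' x \<bullet> w' x h + \<phi>'' x h \<bullet> w x)" for h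
  proof -
    have "continuous_on S \<phi>'" "continuous_on S (\<lambda>x. \<phi>'' x h)"
      using \<open>S \<subseteq> U\<close> c\<phi>' \<phi>''_cont continuous_on_subset by blast+
    moreover have "continuous_on S w" "continuous_on S (\<lambda>x. w' x h)"
      using cw w'_cont continuous_on_subset by blast+
    ultimately show ?thesis by (intro continuous_on_add continuous_on_inner)
  qed
qed

lemma integral_curve_stays_near_start:
  fixes w :: "real^3 \<Rightarrow> real^3" and \<gamma> :: "real \<Rightarrow> real^3"
  assumes S: "closed_C2_surface \<Gamma> nrm"
    and w_deriv: "\<And>x. (w has_derivative w' x) (at x)"
    and w'_cont: "\<And>h. continuous_on UNIV (\<lambda>x. w' x h)"
    and tangent: "\<And>x. x \<in> \<Gamma> \<Longrightarrow> w x \<bullet> nrm x = 0"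
    and curve: "\<And>t. (\<gamma> has_vector_derivative w (\<gamma> t)) (at t)"
    and start: "\<gamma> t0 \<in> \<Gamma>"
  obtains \<delta> where "\<delta> > 0" "\<And>t. \<bar>t - t0\<bar> < \<delta> \<Longrightarrow> \<gamma> t \<in> \<Gamma>"
proof -
  define p where "p = \<gamma> t0"
  obtain U and \<phi> :: "real^3 \<Rightarrow> real" and \<phi>' \<phi>'' where
    U: "open U" "p \<in> U" and
    d\<phi>: "\<forall>x\<in>U. (\<phi> has_derivative (\<lambda>h. \<phi>' x \<bullet> h)) (at x)" and
    d\<phi>': "\<forall>x\<in>U. (\<phi>' has_derivative \<phi>'' x) (at x)" and
    \<phi>''_cont: "\<forall>h. continuous_on U (\<lambda>x. \<phi>'' x h)" and
    regular: "\<forall>x\<in>U. \<phi>' x \<noteq> 0" and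
    level: "\<Gamma> \<inter> U = {x\<in>U. \<phi> x = 0}" and
    normal: "\<forall>x\<in>\<Gamma> \<inter> U. nrm x = (1 / norm (\<phi>' x)) *\<^sub>R \<phi>' x"
    using closed_C2_surface_chart[OF S start[folded p_def]] by blast
  let ?g = "\<lambda>x. \<phi>' x \<bullet> w x"
  obtain e where "e > 0" "cball p e \<subseteq> U" using open_contains_cball[of U] U by blast
  obtain L where lip: "L-lipschitz_on (cball p e) ?g"
    using lipschitz_on_inner_of_C1[OF compact_cball convex_cball \<open>cball p e \<subseteq> U\<close> d\<phi>' \<phi>''_cont w_deriv w'_cont]
    by blast
  have "isCont \<phi>' p" using d\<phi>'[rule_format, OF U(2)] by (rule has_derivative_continuous)
  have "\<phi> p = 0" using level start U(2) by (auto simp: p_def)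
  have lip_ball: "L-lipschitz_on (ball p e) ?g" using lip by (rule lipschitz_on_mono) auto
  \<comment> \<open>Tangency means that ?g vanishes on the zero set of \<phi>; being Lipschitz, it is O(\<phi>) near p.\<close>
  have vanish: "?g z = 0" if "z \<in> ball p e" "\<phi> z = 0" for z
  proof -
    have "z \<in> \<Gamma> \<inter> U" using that level \<open>cball p e \<subseteq> U\<close> by auto
    then have "w z \<bullet> nrm z = 0" using tangent by blast
    moreover have "nrm z = (1 / norm (\<phi>' z)) *\<^sub>R \<phi>' z" using normal \<open>z \<in> \<Gamma> \<inter> U\<close> by blast
    ultimately show ?thesis using regular \<open>z \<in> \<Gamma> \<inter> U\<close> by (simp add: inner_commute)
  qed
  obtain r K where "0 < r" "r \<le> e" and bound: "\<And>y. y \<in> ball p r \<Longrightarrow> \<bar>?g y\<bar> \<le> K * \<bar>\<phi> y\<bar>"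
    using lipschitz_vanishing_on_regular_zero_set[OF U d\<phi>[rule_format] \<open>isCont \<phi>' p\<close>
        regular[rule_format, OF U(2)] \<open>\<phi> p = 0\<close> \<open>e > 0\<close> lip_ball vanish] by blast
  obtain \<delta> where "\<delta> > 0" and "\<forall>t. dist t t0 < \<delta> \<longrightarrow> dist (\<gamma> t) p < r"
    using has_vector_derivative_continuous[OF curve[of t0]] \<open>0 < r\<close>
    unfolding continuous_at_eps_delta p_def by blast
  then have close: "\<And>t. \<bar>t - t0\<bar> < \<delta> \<Longrightarrow> \<gamma> t \<in> ball p r"
    by (simp add: dist_real_def dist_commute)
  have in_U: "\<gamma> t \<in> U" if "\<bar>t - t0\<bar> < \<delta>" for t
    using close[OF that] \<open>r \<le> e\<close> \<open>cball p e \<subseteq> U\<close> by auto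
  have zero: "\<phi> (\<gamma> t) = 0" if "\<bar>t - t0\<bar> < \<delta>" for t
  proof (rule gronwall_zero[where \<psi> = "\<lambda>t. \<phi> (\<gamma> t)" and \<psi>' = "\<lambda>t. ?g (\<gamma> t)" and K = K, OF _ _ _ that])
    fix s assume s: "\<bar>s - t0\<bar> < \<delta>"
    show "((\<lambda>t. \<phi> (\<gamma> t)) has_real_derivative ?g (\<gamma> s)) (at s)"
      using has_derivative_compose[OF curve[of s, unfolded has_vector_derivative_def] d\<phi>[rule_format, OF in_U[OF s]]]
      by (rule has_derivative_imp_has_field_derivative) simp
    show "\<bar>?g (\<gamma> s)\<bar> \<le> K * \<bar>\<phi> (\<gamma> s)\<bar>" using bound close[OF s] by blast
  qed (use \<open>\<phi> p = 0\<close> in \<open>simp add: p_def\<close>)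
  have "\<gamma> t \<in> \<Gamma> \<inter> U" if "\<bar>t - t0\<bar> < \<delta>" for t
    using zero[OF that] in_U[OF that] level by blast
  then show ?thesis using that \<open>\<delta> > 0\<close> by blast
qed

lemma integral_curve_stays_in_surface:
  fixes w :: "real^3 \<Rightarrow> real^3" and \<gamma> :: "real \<Rightarrow> real^3"
  assumes S: "closed_C2_surface \<Gamma> nrm"
    and "\<And>x. (w has_derivative w' x) (at x)"
    and "\<And>h. continuous_on UNIV (\<lambda>x. w' x h)"
    and "\<And>x. x \<in> \<Gamma> \<Longrightarrow> w x \<bullet> nrm x = 0"
    and curve: "\<And>t. (\<gamma> has_vector_derivative w (\<gamma> t)) (at t)"
    and "\<gamma> 0 \<in> \<Gamma>"
  shows "\<gamma> t \<in> \<Gamma>"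
proof -
  let ?A = "\<gamma> -` \<Gamma>"
  have "closed \<Gamma>" using closed_C2_surface_compact[OF S] by (rule compact_imp_closed)
  then have "closed ?A"
    by (rule continuous_closed_vimage[OF _ has_vector_derivative_continuous[OF curve]])
  moreover have "open ?A"
  proof (rule openI)
    fix t0 assume "t0 \<in> ?A"
    then obtain \<delta> where "\<delta> > 0" and near: "\<And>t. \<bar>t - t0\<bar> < \<delta> \<Longrightarrow> \<gamma> t \<in> \<Gamma>"
      using integral_curve_stays_near_start[OF assms(1-5)] by blast
    have "ball t0 \<delta> \<subseteq> ?A" using near by (auto simp: dist_real_def abs_minus_commute)
    with \<open>\<delta> > 0\<close> show "\<exists>e>0. ball t0 e \<subseteq> ?A" by blast
  qed
  moreover have "0 \<in> ?A" using \<open>\<gamma> 0 \<in> \<Gamma>\<close> by simp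
  ultimately have "?A = UNIV" using clopen[of ?A] by blast
  then show ?thesis by auto
qed

lemma curve_in_surface_tangent:
  fixes \<gamma> :: "real \<Rightarrow> real^3"
  assumes S: "closed_C2_surface \<Gamma> nrm"
    and in_surface: "\<And>\<theta>. \<gamma> \<theta> \<in> \<Gamma>"
    and deriv: "(\<gamma> has_vector_derivative v) (at 0)"
  shows "v \<bullet> nrm (\<gamma> 0) = 0"
proof -
  obtain U and \<phi> :: "real^3 \<Rightarrow> real" and \<phi>' \<phi>'' where
    U: "open U" "\<gamma> 0 \<in> U" and
    d\<phi>: "\<forall>x\<in>U. (\<phi> has_derivative (\<lambda>h. \<phi>' x \<bullet> h)) (at x)" and
    "\<forall>x\<in>U. (\<phi>' has_derivative \<phi>'' x) (at x)" "\<forall>h. continuous_on U (\<lambda>x. \<phi>'' x h)"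
    "\<forall>x\<in>U. \<phi>' x \<noteq> 0" and
    level: "\<Gamma> \<inter> U = {x\<in>U. \<phi> x = 0}" and
    normal: "\<forall>x\<in>\<Gamma> \<inter> U. nrm x = (1 / norm (\<phi>' x)) *\<^sub>R \<phi>' x"
    by (rule closed_C2_surface_chart[OF S in_surface])
  have "((\<lambda>\<theta>. \<phi> (\<gamma> \<theta>)) has_real_derivative \<phi>' (\<gamma> 0) \<bullet> v) (at 0)"
    using has_derivative_compose[OF deriv[unfolded has_vector_derivative_def] d\<phi>[rule_format, OF U(2)]]
    by (rule has_derivative_imp_has_field_derivative) simp
  moreover have "((\<lambda>\<theta>. \<phi> (\<gamma> \<theta>)) has_real_derivative 0) (at 0)"
  proof -
    have "(\<gamma> \<longlongrightarrow> \<gamma> 0) (nhds 0)"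
      using has_vector_derivative_continuous[OF deriv] by (simp add: isCont_def tendsto_at_iff_tendsto_nhds)
    then have "eventually (\<lambda>\<theta>. \<gamma> \<theta> \<in> U) (nhds 0)" using U by (rule topological_tendstoD)
    then have "eventually (\<lambda>\<theta>. \<phi> (\<gamma> \<theta>) = 0) (nhds 0)"
      by eventually_elim (use in_surface level in auto)
    then have "((\<lambda>\<theta>. \<phi> (\<gamma> \<theta>)) has_real_derivative 0) (at 0) \<longleftrightarrow> ((\<lambda>\<theta>. 0) has_real_derivative 0) (at 0)"
      by (intro DERIV_cong_ev) auto
    then show ?thesis by simp
  qed
  ultimately have "\<phi>' (\<gamma> 0) \<bullet> v = 0" by (rule DERIV_unique)
  then show ?thesis using normal in_surface U(2) by (simp add: inner_commute)
qed

lemma rot_axis_zero [simp]: "rot_axis u 0 v = v"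
  by (simp add: rot_axis_def)

lemma inner_rot_axis_axis: "u \<bullet> u = 1 \<Longrightarrow> u \<bullet> rot_axis u \<theta> v = u \<bullet> v"
  by (simp add: rot_axis_def inner_add_right dot_cross_self algebra_simps)

lemma cross_axis_rot_axis:
  "u \<bullet> u = 1 \<Longrightarrow> cross3 u (rot_axis u \<theta> v) = cos \<theta> *\<^sub>R cross3 u v + sin \<theta> *\<^sub>R ((u \<bullet> v) *\<^sub>R u - v)"
  by (simp add: rot_axis_def cross_add_right cross_mult_right Lagrange)

lemma rot_axis_add:
  assumes "u \<bullet> u = 1"
  shows "rot_axis u (\<alpha> + \<beta>) v = rot_axis u \<alpha> (rot_axis u \<beta> v)"
proof -
  have "rot_axis u \<alpha> (rot_axis u \<beta> v) = cos \<alpha> *\<^sub>R rot_axis u \<beta> v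
      + sin \<alpha> *\<^sub>R cross3 u (rot_axis u \<beta> v) + ((1 - cos \<alpha>) * (u \<bullet> v)) *\<^sub>R u"
    using inner_rot_axis_axis[OF assms] by (simp add: rot_axis_def)
  also have "\<dots> = rot_axis u (\<alpha> + \<beta>) v"
    unfolding cross_axis_rot_axis[OF assms] by (simp add: rot_axis_def cos_add sin_add algebra_simps)
  finally show ?thesis by simp
qed

lemma rot_axis_has_vector_derivative:
  assumes "u \<bullet> u = 1"
  shows "((\<lambda>t. rot_axis u (t * \<omega>) v) has_vector_derivative \<omega> *\<^sub>R cross3 u (rot_axis u (t * \<omega>) v)) (at t)"
proof -
  have "((\<lambda>t. rot_axis u (t * \<omega>) v) has_vector_derivative
     (- sin (t * \<omega>) * \<omega>) *\<^sub>R v + (cos (t * \<omega>) * \<omega>) *\<^sub>R cross3 u v + (sin (t * \<omega>) * \<omega> * (u \<bullet> v)) *\<^sub>R u) (at t)"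
    unfolding rot_axis_def by (rule derivative_eq_intros refl | simp)+
  then show ?thesis
    by (simp add: cross_axis_rot_axis[OF assms] algebra_simps)
qed

text \<open>For a \<noteq> 0 the flow of x \<mapsto> a \<times> x + b is a screw motion: rotation with angular speed
  norm a about the line through b_a = (a \<times> b) / norm a ^ 2 parallel to a, combined with a
  translation along that line with speed (a \<bullet> b) / norm a.\<close>

definition screw_axis_point :: "real^3 \<Rightarrow> real^3 \<Rightarrow> real^3" where
  "screw_axis_point a b = (1 / (norm a)\<^sup>2) *\<^sub>R cross3 a b"

definition screw_flow :: "real^3 \<Rightarrow> real^3 \<Rightarrow> real \<Rightarrow> real^3 \<Rightarrow> real^3" where
  "screw_flow a b t x =
     screw_axis_point a b + rot_axis ((1 / norm a) *\<^sub>R a) (t * norm a) (x - screw_axis_point a b)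
     + t *\<^sub>R (((a \<bullet> b) / (norm a)\<^sup>2) *\<^sub>R a)"

lemma unit_axis_inner_self: "a \<noteq> 0 \<Longrightarrow> ((1 / norm a) *\<^sub>R a) \<bullet> ((1 / norm a) *\<^sub>R a) = 1"
  by (simp add: power2_norm_eq_inner[symmetric] power2_eq_square)

lemma screw_flow_zero [simp]: "screw_flow a b 0 x = x"
  by (simp add: screw_flow_def)

lemma screw_flow_has_vector_derivative:
  assumes "a \<noteq> 0"
  shows "((\<lambda>t. screw_flow a b t x) has_vector_derivative cross3 a (screw_flow a b t x) + b) (at t)"
proof -
  define u where "u = (1 / norm a) *\<^sub>R a"
  define c where "c = screw_axis_point a b"
  define k where "k = (a \<bullet> b) / (norm a)\<^sup>2"
  have cross_a: "cross3 a v = norm a *\<^sub>R cross3 u v" for v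
    using assms by (simp add: u_def cross_mult_left)
  have "cross3 a c + b = k *\<^sub>R a"
    using assms by (simp add: c_def k_def screw_axis_point_def cross_mult_right Lagrange
        power2_norm_eq_inner[symmetric] algebra_simps)
  then have "cross3 a (screw_flow a b t x) + b = norm a *\<^sub>R cross3 u (rot_axis u (t * norm a) (x - c)) + k *\<^sub>R a"
    unfolding screw_flow_def c_def[symmetric] u_def[symmetric] k_def[symmetric]
    by (simp add: cross_add_right cross_mult_right cross_a[of "rot_axis u (t * norm a) (x - c)"] algebra_simps)
  moreover have "((\<lambda>t. screw_flow a b t x) has_vector_derivative
      norm a *\<^sub>R cross3 u (rot_axis u (t * norm a) (x - c)) + k *\<^sub>R a) (at t)"
    unfolding screw_flow_def c_def[symmetric] u_def[symmetric] k_def[symmetric]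
    using rot_axis_has_vector_derivative[OF unit_axis_inner_self[OF assms, folded u_def]]
    by (auto intro!: derivative_eq_intros)
  ultimately show ?thesis by simp
qed

lemma inner_screw_flow:
  assumes "a \<noteq> 0"
  shows "a \<bullet> screw_flow a b t x = a \<bullet> x + t * (a \<bullet> b)"
proof -
  define u where "u = (1 / norm a) *\<^sub>R a"
  have "a \<bullet> rot_axis u \<theta> v = a \<bullet> v" for \<theta> v
    using inner_rot_axis_axis[OF unit_axis_inner_self[OF assms, folded u_def]] assms
    by (simp add: u_def)
  then show ?thesis
    using assms
    by (simp add: screw_flow_def u_def[symmetric] screw_axis_point_def inner_add_right
        inner_diff_right dot_cross_self power2_norm_eq_inner[symmetric])
qed

lemma screw_flow_rotation:
  assumes "a \<noteq> 0" "a \<bullet> b = 0"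
  shows "screw_flow a b (\<theta> / norm a) x
    = screw_axis_point a b + rot_axis ((1 / norm a) *\<^sub>R a) \<theta> (x - screw_axis_point a b)"
  using assms by (simp add: screw_flow_def)

lemma bounded_linear_cross3: "bounded_linear (cross3 a)"
  using bilinear_cross bilinear_conv_bounded_bilinear bounded_bilinear.bounded_linear_right by blast

lemma rigid_motion_stays_in_surface:
  assumes S: "closed_C2_surface \<Gamma> nrm"
    and tangent: "\<And>x. x \<in> \<Gamma> \<Longrightarrow> (cross3 a x + b) \<bullet> nrm x = 0"
    and curve: "\<And>t. (\<gamma> has_vector_derivative cross3 a (\<gamma> t) + b) (at t)"
    and "\<gamma> 0 \<in> \<Gamma>"
  shows "\<gamma> t \<in> \<Gamma>"
proof (rule integral_curve_stays_in_surface[OF S _ _ tangent curve \<open>\<gamma> 0 \<in> \<Gamma>\<close>])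
  show "((\<lambda>x. cross3 a x + b) has_derivative cross3 a) (at x)" for x
    by (auto intro!: derivative_eq_intros bounded_linear.has_derivative[OF bounded_linear_cross3])
qed simp

lemma bounded_affine_imp_slope_zero:
  fixes \<alpha> \<beta> :: real
  assumes "\<And>t. \<bar>\<alpha> + t * \<beta>\<bar> \<le> B"
  shows "\<beta> = 0"
proof (rule ccontr)
  assume "\<beta> \<noteq> 0"
  then have "\<alpha> + ((B + \<bar>\<alpha>\<bar> + 1) / \<beta>) * \<beta> > B" by simp
  with assms show False by (metis abs_ge_self not_le order_trans)
qed

lemma compact_inner_bounded:
  fixes S :: "'a::real_inner set"
  assumes "compact S"
  obtains B where "\<And>y. y \<in> S \<Longrightarrow> \<bar>u \<bullet> y\<bar> \<le> B"
proof -
  obtain M where "\<And>y. y \<in> S \<Longrightarrow> norm y \<le> M"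
    using compact_imp_bounded[OF assms] by (auto simp: bounded_iff)
  then show ?thesis
    using that[of "norm u * M"] Cauchy_Schwarz_ineq2[of u]
    by (meson mult_left_mono norm_ge_zero order_trans)
qed

lemma tangent_rigid_motion_axis_nonzero:
  assumes S: "closed_C2_surface \<Gamma> nrm"
    and tangent: "\<And>x. x \<in> \<Gamma> \<Longrightarrow> (cross3 a x + b) \<bullet> nrm x = 0"
    and nonzero: "(\<lambda>x. cross3 a x + b) \<noteq> (\<lambda>x. 0)"
  shows "a \<noteq> 0"
proof
  assume "a = 0"
  then have "b \<noteq> 0" using nonzero by auto
  \<comment> \<open>The flow of the constant field b translates the bounded set \<Gamma> arbitrarily far.\<close>
  obtain x0 where "x0 \<in> \<Gamma>" using closed_C2_surface_nonempty[OF S] by blast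
  obtain B where B: "\<And>y. y \<in> \<Gamma> \<Longrightarrow> \<bar>b \<bullet> y\<bar> \<le> B"
    using compact_inner_bounded[OF closed_C2_surface_compact[OF S]] by blast
  have "x0 + t *\<^sub>R b \<in> \<Gamma>" for t
  proof (rule rigid_motion_stays_in_surface[OF S tangent, where \<gamma> = "\<lambda>t. x0 + t *\<^sub>R b"])
    show "((\<lambda>t. x0 + t *\<^sub>R b) has_vector_derivative cross3 a (x0 + s *\<^sub>R b) + b) (at s)" for s
      using \<open>a = 0\<close> by (auto intro!: derivative_eq_intros)
    show "x0 + 0 *\<^sub>R b \<in> \<Gamma>" using \<open>x0 \<in> \<Gamma>\<close> by simp
  qed
  then have "\<bar>b \<bullet> x0 + t * (b \<bullet> b)\<bar> \<le> B" for t
    using B[of "x0 + t *\<^sub>R b"] by (simp add: inner_add_right)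
  then have "b \<bullet> b = 0" by (rule bounded_affine_imp_slope_zero)
  with \<open>b \<noteq> 0\<close> show False by simp
qed

lemma tangent_rigid_motion_inner_zero:
  assumes S: "closed_C2_surface \<Gamma> nrm"
    and tangent: "\<And>x. x \<in> \<Gamma> \<Longrightarrow> (cross3 a x + b) \<bullet> nrm x = 0"
    and "a \<noteq> 0"
  shows "a \<bullet> b = 0"
proof -
  \<comment> \<open>Along the screw flow the coordinate along a grows at the constant rate a \<bullet> b.\<close>
  obtain x0 where "x0 \<in> \<Gamma>" using closed_C2_surface_nonempty[OF S] by blast
  obtain B where B: "\<And>y. y \<in> \<Gamma> \<Longrightarrow> \<bar>a \<bullet> y\<bar> \<le> B"
    using compact_inner_bounded[OF closed_C2_surface_compact[OF S]] by blast
  have "screw_flow a b t x0 \<in> \<Gamma>" for t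
    using rigid_motion_stays_in_surface[OF S tangent screw_flow_has_vector_derivative[OF \<open>a \<noteq> 0\<close>]]
      \<open>x0 \<in> \<Gamma>\<close> by simp
  then have "\<bar>a \<bullet> x0 + t * (a \<bullet> b)\<bar> \<le> B" for t
    using B[of "screw_flow a b t x0"] by (simp add: inner_screw_flow[OF \<open>a \<noteq> 0\<close>])
  then show ?thesis by (rule bounded_affine_imp_slope_zero)
qed

lemma tangent_rigid_motion_axially_symmetric:
  assumes S: "closed_C2_surface \<Gamma> nrm"
    and tangent: "\<And>x. x \<in> \<Gamma> \<Longrightarrow> (cross3 a x + b) \<bullet> nrm x = 0"
    and "a \<noteq> 0" "a \<bullet> b = 0"
  shows "axially_symmetric \<Gamma> a (screw_axis_point a b)"
  unfolding axially_symmetric_def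
proof
  fix \<theta>
  define u where "u = (1 / norm a) *\<^sub>R a"
  define c where "c = screw_axis_point a b"
  let ?R = "\<lambda>\<theta> x. c + rot_axis u \<theta> (x - c)"
  have inv: "?R \<theta> x \<in> \<Gamma>" if "x \<in> \<Gamma>" for \<theta> x
  proof -
    have "screw_flow a b (\<theta> / norm a) x \<in> \<Gamma>"
      using rigid_motion_stays_in_surface[OF S tangent screw_flow_has_vector_derivative[OF \<open>a \<noteq> 0\<close>]]
        that by simp
    then show ?thesis
      by (simp add: screw_flow_rotation[OF \<open>a \<noteq> 0\<close> \<open>a \<bullet> b = 0\<close>] c_def u_def)
  qed
  have rotate_back: "?R \<theta> (?R (- \<theta>) y) = y" for y
    using rot_axis_add[OF unit_axis_inner_self[OF \<open>a \<noteq> 0\<close>], of \<theta> "- \<theta>"]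
    by (simp add: u_def)
  show "?R \<theta> ` \<Gamma> = \<Gamma>"
  proof
    show "?R \<theta> ` \<Gamma> \<subseteq> \<Gamma>" using inv by blast
    show "\<Gamma> \<subseteq> ?R \<theta> ` \<Gamma>"
    proof
      fix y assume "y \<in> \<Gamma>"
      have "y = ?R \<theta> (?R (- \<theta>) y)" using rotate_back[of y] by simp
      moreover have "?R (- \<theta>) y \<in> \<Gamma>" using inv \<open>y \<in> \<Gamma>\<close> by blast
      ultimately show "y \<in> ?R \<theta> ` \<Gamma>" by blast
    qed
  qed
qed

lemma axially_symmetric_imp_tangent:
  assumes S: "closed_C2_surface \<Gamma> nrm"
    and "a \<noteq> 0" and sym: "axially_symmetric \<Gamma> a c" and "x \<in> \<Gamma>"
  shows "cross3 a (x - c) \<bullet> nrm x = 0"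
proof -
  define u where "u = (1 / norm a) *\<^sub>R a"
  let ?\<gamma> = "\<lambda>\<theta>. c + rot_axis u \<theta> (x - c)"
  have "(?\<gamma> has_vector_derivative cross3 u (x - c)) (at 0)"
    using rot_axis_has_vector_derivative[OF unit_axis_inner_self[OF \<open>a \<noteq> 0\<close>, folded u_def], of 1 "x - c" 0]
    by (auto intro!: derivative_eq_intros)
  moreover have "?\<gamma> \<theta> \<in> \<Gamma>" for \<theta>
    using sym \<open>x \<in> \<Gamma>\<close> unfolding axially_symmetric_def u_def by blast
  ultimately have "cross3 u (x - c) \<bullet> nrm (?\<gamma> 0) = 0"
    by (intro curve_in_surface_tangent[OF S, where \<gamma> = ?\<gamma>])
  then have "cross3 u (x - c) \<bullet> nrm x = 0" by simp
  moreover have "a = norm a *\<^sub>R u" using \<open>a \<noteq> 0\<close> by (simp add: u_def)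
  ultimately show ?thesis by (metis cross_mult_left inner_scaleR_left mult_zero_right)
qed

lemma cross3_shift_nonzero:
  assumes "a \<noteq> 0"
  shows "(\<lambda>x. cross3 a (x - c)) \<noteq> (\<lambda>x. 0)"
proof
  assume "(\<lambda>x. cross3 a (x - c)) = (\<lambda>x. 0)"
  then have "cross3 a v = 0" for v
    using fun_cong[of _ _ "c + v"] by fastforce
  with cross_basis_nonzero[OF assms] show False by simp
qed

lemma axially_symmetric_imp_rigid_tangent:
  assumes "closed_C2_surface \<Gamma> nrm" "a \<noteq> 0" "axially_symmetric \<Gamma> a c"
  shows "(\<lambda>x. cross3 a (x - c)) \<in> rigid_tangent \<Gamma> nrm"
proof -
  have "(\<lambda>x. cross3 a (x - c)) = (\<lambda>x. cross3 a x + - cross3 a c)"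
    by (simp add: Cross3.right_diff_distrib)
  then show ?thesis
    using axially_symmetric_imp_tangent[OF assms] unfolding rigid_tangent_def by blast
qed

theorem lemmaE1:
  fixes \<Gamma> :: "(real^3) set" and nrm :: "real^3 \<Rightarrow> real^3"
  assumes "closed_C2_surface \<Gamma> nrm"
  shows "(\<forall>a b. (\<lambda>x. cross3 a x + b) \<in> rigid_tangent \<Gamma> nrm \<and> (\<lambda>x. cross3 a x + b) \<noteq> (\<lambda>x. 0) \<longrightarrow>
            a \<noteq> 0 \<and> a \<bullet> b = 0 \<and>
            axially_symmetric \<Gamma> a ((1 / (norm a)^2) *\<^sub>R cross3 a b))
       \<and> (\<forall>a bt. a \<noteq> 0 \<and> axially_symmetric \<Gamma> a bt \<longrightarrow>
            (\<lambda>x. cross3 a (x - bt)) \<in> rigid_tangent \<Gamma> nrm - {(\<lambda>x. 0)})"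
proof (intro conjI allI impI; elim conjE)
  fix a b
  assume "(\<lambda>x. cross3 a x + b) \<in> rigid_tangent \<Gamma> nrm" and nonzero: "(\<lambda>x. cross3 a x + b) \<noteq> (\<lambda>x. 0)"
  then have tangent: "\<And>x. x \<in> \<Gamma> \<Longrightarrow> (cross3 a x + b) \<bullet> nrm x = 0"
    by (simp add: rigid_tangent_def)
  have "a \<noteq> 0" by (rule tangent_rigid_motion_axis_nonzero[OF assms tangent nonzero])
  moreover have "a \<bullet> b = 0" by (rule tangent_rigid_motion_inner_zero[OF assms tangent \<open>a \<noteq> 0\<close>])
  moreover have "axially_symmetric \<Gamma> a (screw_axis_point a b)"
    by (rule tangent_rigid_motion_axially_symmetric[OF assms tangent \<open>a \<noteq> 0\<close> \<open>a \<bullet> b = 0\<close>])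
  ultimately show "a \<noteq> 0" "a \<bullet> b = 0" "axially_symmetric \<Gamma> a ((1 / (norm a)^2) *\<^sub>R cross3 a b)"
    by (simp_all add: screw_axis_point_def)
next
  fix a bt
  assume "a \<noteq> 0" "axially_symmetric \<Gamma> a bt"
  then show "(\<lambda>x. cross3 a (x - bt)) \<in> rigid_tangent \<Gamma> nrm - {(\<lambda>x. 0)}"
    using axially_symmetric_imp_rigid_tangent[OF assms] cross3_shift_nonzero by blast
qed

end
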